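(* Let $n,m,l,N\in\mathbb{N}_{>0}$ and let $\mathcal{M}=\{A_1,\dots,A_m\}\subset\mathbb{R}^{n\times n}$. Let $\omega_N=\{(x_{i},j_{i,1},\dots,j_{i,l}) : 1\le i\le N\}\subset \mathbb{S}\times\{1,\dots,m\}^l$ be a sample (drawn uniformly), and for $\mathbf{j}=(j_1,\dots,j_l)$ write $\mathbf{A_j}:=A_{j_l}A_{j_{l-1}}\cdots A_{j_1}$. Let $\gamma^*(\omega_N)$ be the optimal value of the optimization problem $$\min_{\gamma,P}\ \gamma\quad\text{s.t.}\quad (\mathbf{A_j}x)^TP\,\mathbf{A_j}x\le \gamma^{2l}x^TPx\ \ \forall (x,\mathbf{j})\in\omega_N,\qquad P\succ 0,\ \gamma\ge 0,$$ over $\gamma\in\mathbb{R}$ and symmetric $P\in\mathbb{R}^{n\times n}$. Then $$\rho(\mathcal{M})\ \ge\ \frac{\gamma^*(\omega_N)}{\sqrt[2l]{n}}.$$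
   Context: $\mathbb{S}$ denotes the Euclidean unit sphere in $\mathbb{R}^n$. For a finite set $\mathcal{M}\subset\mathbb{R}^{n\times n}$, the joint spectral radius is $\rho(\mathcal{M})=\lim_{k\to\infty}\max\{\|A_{i_1}\cdots A_{i_k}\|^{1/k}: A_{i_j}\in\mathcal{M}\}$. Note the optimization problem only requires the pairs $(x,\mathbf{A_j}x)$, i.e. observed trajectories of length $l$ of the switched system $x_{k+1}=A_{\tau(k)}x_k$. *)

theory Defs
  imports "HOL-Analysis.Analysis"
begin

text \<open>Product of a switching sequence: mat_seq_prod A js k = A (js (k-1)) ** ... ** A (js 0)
  (so for a word j = (j_1,...,j_l), stored as js 0 = j_1, ..., js (l-1) = j_l,
  this is A_{j_l} ... A_{j_1}).\<close>
fun mat_seq_prod :: "(nat \<Rightarrow> real^'n^'n) \<Rightarrow> (nat \<Rightarrow> nat) \<Rightarrow> nat \<Rightarrow> real^'n^'n" where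
  "mat_seq_prod A js 0 = mat 1"
| "mat_seq_prod A js (Suc k) = A (js k) ** mat_seq_prod A js k"

definition mat_opnorm :: "real^'n^'n \<Rightarrow> real" where
  "mat_opnorm B = onorm (\<lambda>x. B *v x)"

definition jsr :: "(nat \<Rightarrow> real^'n^'n) \<Rightarrow> nat \<Rightarrow> real" where
  "jsr A m = lim (\<lambda>k. Max {root k (mat_opnorm (mat_seq_prod A js k)) | js.
                              \<forall>i<k. js i \<in> {1..m}})"

definition sym_mat :: "real^'n^'n \<Rightarrow> bool" where
  "sym_mat P \<longleftrightarrow> transpose P = P"

definition pos_def_mat :: "real^'n^'n \<Rightarrow> bool" where
  "pos_def_mat P \<longleftrightarrow> sym_mat P \<and> (\<forall>v. v \<noteq> 0 \<longrightarrow> v \<bullet> (P *v v) > 0)"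

text \<open>Feasibility of (gamma, P) for the sample given by x (points) and J (index words),
  sample index i ranging over 1..N, word positions 0..l-1.\<close>
definition feasible ::
  "(nat \<Rightarrow> real^'n^'n) \<Rightarrow> nat \<Rightarrow> nat \<Rightarrow> (nat \<Rightarrow> real^'n) \<Rightarrow> (nat \<Rightarrow> nat \<Rightarrow> nat)
    \<Rightarrow> real \<Rightarrow> real^'n^'n \<Rightarrow> bool" where
  "feasible A l N x J \<gamma> P \<longleftrightarrow>
     \<gamma> \<ge> 0 \<and> pos_def_mat P \<and>
     (\<forall>i\<in>{1..N}. let y = mat_seq_prod A (J i) l *v x i in
        y \<bullet> (P *v y) \<le> \<gamma> ^ (2*l) * (x i \<bullet> (P *v x i)))"

definition opt_value ::
  "(nat \<Rightarrow> real^'n^'n) \<Rightarrow> nat \<Rightarrow> nat \<Rightarrow> (nat \<Rightarrow> real^'n) \<Rightarrow> (nat \<Rightarrow> nat \<Rightarrow> nat) \<Rightarrow> real" where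
  "opt_value A l N x J = Inf {\<gamma>. \<exists>P. feasible A l N x J \<gamma> P}"

end

theory Submission
  imports Defs
begin

(* Fix r above the joint spectral radius. By Fekete's lemma every product of length k has norm
   at most B r^k, so K = {z. |T z| <= r^k for all products T of length k} is a compact symmetric
   convex body with 0 in its interior, mapped into itself by T / r^l for every product T of
   length l. John's theorem gives an invertible M with (1/sqrt n) U <= M K <= U, U the Euclidean
   unit ball, so in the norm |M z| each T / r^l has gain at most sqrt n. Hence P = M^T M and
   gamma = n^(1/2l) r satisfy every sampled constraint whatever the sample, and the optimal value
   is at most n^(1/2l) r. *)

subsection \<open>Fekete's lemma for submultiplicative sequences\<close>

lemma submultiplicative_le_geometric:
  fixes a :: "nat \<Rightarrow> real"
  assumes nonneg: "\<And>k. 0 \<le> a k" and submult: "\<And>j k. a (j + k) \<le> a j * a k"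
    and u: "Inf ((\<lambda>k. root k (a k)) ` {1..}) < u"
  shows "\<exists>B>0. \<forall>k. a k \<le> B * u ^ k"
proof -
  obtain p where p: "p \<ge> 1" "root p (a p) < u"
    using cInf_lessD[OF _ u] by auto
  have u0: "0 < u" using p real_root_ge_zero[of "a p" p] nonneg[of p] by linarith
  have ap: "a p \<le> u ^ p"
  proof -
    have "a p = root p (a p) ^ p" using p nonneg by simp
    also have "\<dots> \<le> u ^ p" using p by (intro power_mono) (auto simp: nonneg)
    finally show ?thesis .
  qed
  have period: "a (q * p + r) \<le> a p ^ q * a r" for q r
  proof (induction q)
    case (Suc q)
    have "a (Suc q * p + r) = a (p + (q * p + r))" by (simp add: algebra_simps)
    also have "\<dots> \<le> a p * a (q * p + r)" by (rule submult)
    also have "\<dots> \<le> a p * (a p ^ q * a r)" using Suc nonneg by (simp add: mult_left_mono)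
    finally show ?case by (simp add: mult.assoc)
  qed simp
  define B where "B = max 1 (Max ((\<lambda>r. a r / u ^ r) ` {..<p}))"
  have "a k \<le> B * u ^ k" for k
  proof -
    define q r where "q = k div p" and "r = k mod p"
    have k: "k = q * p + r" and rp: "r < p" using p by (simp_all add: q_def r_def)
    have "a k \<le> a p ^ q * a r" using period k by simp
    also have "\<dots> \<le> (u ^ p) ^ q * a r" using ap nonneg by (intro mult_right_mono power_mono) auto
    also have "\<dots> = u ^ k * (a r / u ^ r)"
      using u0 k by (simp add: power_add power_mult field_simps mult.commute)
    also have "\<dots> \<le> u ^ k * B"
    proof -
      have "a r / u ^ r \<le> Max ((\<lambda>r. a r / u ^ r) ` {..<p})" using rp by (intro Max_ge) auto
      then show ?thesis unfolding B_def using u0 by (intro mult_left_mono) auto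
    qed
    finally show ?thesis by (simp add: mult.commute)
  qed
  moreover have "B > 0" by (simp add: B_def)
  ultimately show ?thesis by blast
qed

lemma submultiplicative_root_tendsto_Inf:
  fixes a :: "nat \<Rightarrow> real"
  assumes nonneg: "\<And>k. 0 \<le> a k" and submult: "\<And>j k. a (j + k) \<le> a j * a k"
  shows "(\<lambda>k. root k (a k)) \<longlonglongrightarrow> Inf ((\<lambda>k. root k (a k)) ` {1..})"
proof (rule LIMSEQ_I)
  define L where "L = Inf ((\<lambda>k. root k (a k)) ` {1..})"
  have bdd: "bdd_below ((\<lambda>k. root k (a k)) ` {1..})"
    by (rule bdd_belowI[of _ 0]) (auto simp: nonneg)
  have L0: "0 \<le> L" unfolding L_def by (rule cInf_greatest) (auto simp: nonneg)
  fix e :: real assume e: "0 < e"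
  define u where "u = L + e/2"
  have u0: "0 < u" "L < u" using L0 e by (auto simp: u_def)
  obtain B where B: "B > 0" "\<And>k. a k \<le> B * u ^ k"
    using submultiplicative_le_geometric[OF nonneg submult u0(2)[unfolded L_def]] by blast
  have "1 < (L + e) / u" using u0 e by (simp add: u_def field_simps)
  from order_tendstoD(2)[OF LIMSEQ_root_const[OF B(1)] this]
  obtain N where N: "\<And>k. k \<ge> N \<Longrightarrow> root k B < (L + e) / u"
    by (auto simp: eventually_sequentially)
  have "norm (root k (a k) - L) < e" if k: "k \<ge> max N 1" for k
  proof -
    have "L \<le> root k (a k)" unfolding L_def using k by (intro cInf_lower bdd) auto
    moreover have "root k (a k) \<le> root k (B * u ^ k)"
      using k B by (intro real_root_le_mono) auto
    moreover have "root k (B * u ^ k) = root k B * u"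
      using k u0 by (simp add: real_root_mult real_root_power)
    moreover have "root k B * u < L + e"
      using N[of k] k u0 by (simp add: field_simps)
    ultimately show ?thesis by simp
  qed
  then show "\<exists>N. \<forall>k\<ge>N. norm (root k (a k) - Inf ((\<lambda>k. root k (a k)) ` {1..})) < e"
    unfolding L_def by blast
qed

lemma mat_seq_prod_add:
  "mat_seq_prod A js (k + j) = mat_seq_prod A (\<lambda>i. js (i + k)) j ** mat_seq_prod A js k"
  by (induction j) (auto simp: matrix_mul_assoc add.commute)

lemma mat_seq_prod_cong:
  "(\<And>i. i < k \<Longrightarrow> f i = g i) \<Longrightarrow> mat_seq_prod A f k = mat_seq_prod A g k"
  by (induction k) auto

lemma norm_mult_le_mat_opnorm: "norm (T *v x) \<le> mat_opnorm T * norm x"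
  unfolding mat_opnorm_def by (rule onorm) simp

lemma mat_opnorm_nonneg: "0 \<le> mat_opnorm T"
  unfolding mat_opnorm_def by (rule onorm_pos_le) simp

lemma mat_opnorm_mult_le: "mat_opnorm (X ** Y) \<le> mat_opnorm X * mat_opnorm Y"
proof -
  have "(\<lambda>x. (X ** Y) *v x) = (\<lambda>x. X *v x) \<circ> (\<lambda>x. Y *v x)"
    by (auto simp: matrix_vector_mul_assoc)
  then show ?thesis
    unfolding mat_opnorm_def by (metis onorm_compose matrix_vector_mul_bounded_linear)
qed

definition switched_products :: "(nat \<Rightarrow> real^'n^'n) \<Rightarrow> nat \<Rightarrow> nat \<Rightarrow> (real^'n^'n) set" where
  "switched_products A m k = {mat_seq_prod A js k | js. \<forall>i<k. js i \<in> {1..m}}"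

lemma switched_products_eq_image_PiE:
  "switched_products A m k = (\<lambda>js. mat_seq_prod A js k) ` ({..<k} \<rightarrow>\<^sub>E {1..m})"
proof
  show "switched_products A m k \<subseteq> (\<lambda>js. mat_seq_prod A js k) ` ({..<k} \<rightarrow>\<^sub>E {1..m})"
  proof
    fix T assume "T \<in> switched_products A m k"
    then obtain js where js: "\<forall>i<k. js i \<in> {1..m}" "T = mat_seq_prod A js k"
      unfolding switched_products_def by blast
    then have "restrict js {..<k} \<in> {..<k} \<rightarrow>\<^sub>E {1..m}" by simp
    moreover have "T = mat_seq_prod A (restrict js {..<k}) k"
      using js(2) by (auto intro: mat_seq_prod_cong)
    ultimately show "T \<in> (\<lambda>js. mat_seq_prod A js k) ` ({..<k} \<rightarrow>\<^sub>E {1..m})" by blast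
  qed
  show "(\<lambda>js. mat_seq_prod A js k) ` ({..<k} \<rightarrow>\<^sub>E {1..m}) \<subseteq> switched_products A m k"
    unfolding switched_products_def by (force simp: PiE_iff)
qed

lemma finite_switched_products: "finite (switched_products A m k)"
  by (simp add: switched_products_eq_image_PiE finite_PiE)

lemma switched_products_nonempty: "m > 0 \<Longrightarrow> switched_products A m k \<noteq> {}"
  unfolding switched_products_def by force

definition max_product_norm :: "(nat \<Rightarrow> real^'n^'n) \<Rightarrow> nat \<Rightarrow> nat \<Rightarrow> real" where
  "max_product_norm A m k = Max (mat_opnorm ` switched_products A m k)"

lemma mat_opnorm_le_max_product_norm:
  "\<forall>i<k. js i \<in> {1..m} \<Longrightarrow> mat_opnorm (mat_seq_prod A js k) \<le> max_product_norm A m k"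
proof -
  assume "\<forall>i<k. js i \<in> {1..m}"
  then have "mat_seq_prod A js k \<in> switched_products A m k" unfolding switched_products_def by auto
  then show ?thesis unfolding max_product_norm_def by (intro Max_ge) (auto simp: finite_switched_products)
qed

lemma max_product_norm_attained:
  assumes "m > 0"
  obtains js where "\<forall>i<k. js i \<in> {1..m}"
    and "max_product_norm A m k = mat_opnorm (mat_seq_prod A js k)"
proof -
  have "max_product_norm A m k \<in> mat_opnorm ` switched_products A m k"
    unfolding max_product_norm_def
    by (intro Max_in) (auto simp: finite_switched_products switched_products_nonempty[OF assms])
  then show ?thesis using that unfolding switched_products_def by auto
qed

lemma max_product_norm_nonneg: "m > 0 \<Longrightarrow> 0 \<le> max_product_norm A m k"
  by (metis max_product_norm_attained mat_opnorm_nonneg)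

lemma max_product_norm_submult:
  assumes "m > 0"
  shows "max_product_norm A m (j + k) \<le> max_product_norm A m j * max_product_norm A m k"
proof -
  obtain js where js: "\<forall>i<k + j. js i \<in> {1..m}"
    and eq: "max_product_norm A m (k + j) = mat_opnorm (mat_seq_prod A js (k + j))"
    by (rule max_product_norm_attained[OF assms])
  have "mat_opnorm (mat_seq_prod A js (k + j))
        \<le> mat_opnorm (mat_seq_prod A (\<lambda>i. js (i + k)) j) * mat_opnorm (mat_seq_prod A js k)"
    unfolding mat_seq_prod_add by (rule mat_opnorm_mult_le)
  also have "\<dots> \<le> max_product_norm A m j * max_product_norm A m k"
  proof (rule mult_mono)
    show "mat_opnorm (mat_seq_prod A (\<lambda>i. js (i + k)) j) \<le> max_product_norm A m j"
      using js by (intro mat_opnorm_le_max_product_norm) simp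
    show "mat_opnorm (mat_seq_prod A js k) \<le> max_product_norm A m k"
      using js by (intro mat_opnorm_le_max_product_norm) simp
  qed (simp_all add: assms max_product_norm_nonneg mat_opnorm_nonneg)
  finally show ?thesis using eq by (simp add: add.commute)
qed

lemma jsr_eq_Inf_root_max_product_norm:
  assumes "m > 0"
  shows "jsr A m = Inf ((\<lambda>k. root k (max_product_norm A m k)) ` {1..})"
proof -
  have "Max {root k (mat_opnorm (mat_seq_prod A js k)) | js. \<forall>i<k. js i \<in> {1..m}}
        = root k (max_product_norm A m k)" for k
  proof -
    have "mono (root k)" by (cases "k = 0") (auto simp: mono_def intro: real_root_le_mono)
    then have "root k (max_product_norm A m k) = Max (root k ` mat_opnorm ` switched_products A m k)"
      unfolding max_product_norm_def
      by (rule mono_Max_commute) (auto simp: finite_switched_products switched_products_nonempty assms)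
    moreover have "{root k (mat_opnorm (mat_seq_prod A js k)) | js. \<forall>i<k. js i \<in> {1..m}}
        = root k ` mat_opnorm ` switched_products A m k"
      unfolding switched_products_def by auto
    ultimately show ?thesis by simp
  qed
  then have eq:
    "(\<lambda>k. Max {root k (mat_opnorm (mat_seq_prod A js k)) | js. \<forall>i<k. js i \<in> {1..m}})
      = (\<lambda>k. root k (max_product_norm A m k))"
    by (intro ext)
  have "(\<lambda>k. root k (max_product_norm A m k))
      \<longlonglongrightarrow> Inf ((\<lambda>k. root k (max_product_norm A m k)) ` {1..})"
    by (rule submultiplicative_root_tendsto_Inf) (auto intro: max_product_norm_nonneg
        max_product_norm_submult assms)
  then show ?thesis unfolding jsr_def eq by (rule limI)
qed

lemma mat_opnorm_le_geometric_above_jsr: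
  assumes m: "m > 0" and r: "jsr A m < r"
  shows "0 < r"
    and "\<exists>B>0. \<forall>k js. (\<forall>i<k. js i \<in> {1..m}) \<longrightarrow>
      mat_opnorm (mat_seq_prod A js k) \<le> B * r ^ k"
proof -
  have "0 \<le> jsr A m"
    unfolding jsr_eq_Inf_root_max_product_norm[OF m]
    by (rule cInf_greatest) (auto simp: max_product_norm_nonneg m)
  then show "0 < r" using r by simp
  obtain B where "B > 0" "\<And>k. max_product_norm A m k \<le> B * r ^ k"
    using submultiplicative_le_geometric[of "max_product_norm A m" r, OF max_product_norm_nonneg[OF m]
        max_product_norm_submult[OF m]] r
    unfolding jsr_eq_Inf_root_max_product_norm[OF m] by blast
  then show "\<exists>B>0. \<forall>k js. (\<forall>i<k. js i \<in> {1..m}) \<longrightarrow>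
      mat_opnorm (mat_seq_prod A js k) \<le> B * r ^ k"
    using mat_opnorm_le_max_product_norm order_trans by blast
qed

subsection \<open>John's theorem for symmetric convex bodies\<close>

lemma exists_flattening_with_volume_gain:
  fixes c :: real and n :: nat
  assumes "c > real n" "n \<ge> 1"
  shows "\<exists>\<theta>. 0 < \<theta> \<and> \<theta> < 1 \<and> (\<theta> + (1 - \<theta>) * c) * \<theta> ^ (n - 1) > 1"
proof -
  define e where "e = (c - n) / (2 * (c - 1) * n)"
  have c1: "c > 1" and n1: "real n \<ge> 1" using assms by auto
  have e0: "e > 0" unfolding e_def using assms c1 by (simp add: field_simps)
  have e1: "e * (c - 1) \<le> (c - n) / (2 * n)" unfolding e_def using c1 assms by (simp add: field_simps)
  have "2 * real n * (c - 1) \<ge> 2 * (c - 1)" using n1 c1 by (intro mult_right_mono) auto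
  then have "(c - n) / (2 * n) < c - 1" using n1 c1 by (simp add: field_simps)
  then have "e * (c - 1) < c - 1" using e1 by linarith
  then have e2: "e < 1" using c1 by simp
  have gain: "e * (c - 1) * (n - 1) < c - n"
  proof -
    have "e * (c - 1) * (n - 1) \<le> (c - n) / (2 * n) * (n - 1)"
      using e1 assms by (intro mult_right_mono) auto
    also have "\<dots> = (c - n) * (real (n - 1) / real (2 * n))" using assms by (simp add: of_nat_diff)
    also have "\<dots> < (c - n) * 1"
      using assms by (intro mult_strict_left_mono) (auto simp: field_simps)
    finally show ?thesis by simp
  qed
  have "1 < 1 + e * ((c - n) - e * (c - 1) * (n - 1))" using gain e0 by simp
  also have "\<dots> = (1 + e * (c - 1)) * (1 - real (n - 1) * e)"
    using assms by (simp add: algebra_simps of_nat_diff)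
  also have "\<dots> \<le> (1 + e * (c - 1)) * (1 - e) ^ (n - 1)"
    using Bernoulli_inequality[of "- e" "n - 1"] e0 e2 c1 by (intro mult_left_mono) auto
  also have "\<dots> = ((1 - e) + (1 - (1 - e)) * c) * (1 - e) ^ (n - 1)" by (simp add: algebra_simps)
  finally show ?thesis using e0 e2 by (intro exI[of _ "1 - e"]) auto
qed

lemma norm_matrix_le_entry_bound:
  fixes M :: "real^'n^'m"
  assumes "\<And>i j. \<bar>M$i$j\<bar> \<le> b"
  shows "norm M \<le> real CARD('m) * (real CARD('n) * b)"
proof -
  have "norm M \<le> (\<Sum>i\<in>UNIV. norm (M$i))" unfolding norm_vec_def by (rule L2_set_le_sum) simp
  also have "\<dots> \<le> (\<Sum>i\<in>(UNIV::'m set). real CARD('n) * b)"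
  proof (rule sum_mono)
    fix i
    have "norm (M$i) \<le> (\<Sum>j\<in>UNIV. \<bar>M$i$j\<bar>)" by (rule norm_le_l1_cart)
    also have "\<dots> \<le> (\<Sum>j\<in>(UNIV::'n set). b)" using assms by (intro sum_mono) auto
    finally show "norm (M$i) \<le> real CARD('n) * b" by simp
  qed
  finally show ?thesis by simp
qed

lemma inner_transpose_mult: "(transpose N *v h) \<bullet> (y::real^'n) = h \<bullet> (N *v y)"
  by (simp add: dot_lmul_matrix)

lemma norm_transpose_orthogonal_mult:
  assumes "orthogonal_matrix R"
  shows "norm (transpose R *v u) = norm (u::real^'n)"
proof -
  have "(transpose R *v u) \<bullet> (transpose R *v u) = u \<bullet> (R *v (transpose R *v u))"
    by (rule inner_transpose_mult)
  also have "\<dots> = u \<bullet> u"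
    using assms unfolding orthogonal_matrix_def by (simp only: matrix_vector_mul_assoc) simp
  finally show ?thesis by (metis norm_eq_sqrt_inner)
qed

definition axis_stretch :: "'n \<Rightarrow> real \<Rightarrow> real \<Rightarrow> real^'n^'n" where
  "axis_stretch i0 d1 d2 = (\<chi> i j. if i = j then (if i = i0 then d1 else d2) else 0)"

lemma norm_axis_stretch_mult_squared:
  "norm (axis_stretch i0 d1 d2 *v v) ^ 2 = d2^2 * norm v ^ 2 + (d1^2 - d2^2) * (v$i0)^2"
proof -
  have stretch: "(axis_stretch i0 d1 d2 *v v) $ i = (if i = i0 then d1 else d2) * v$i" for i
  proof -
    have "(axis_stretch i0 d1 d2 *v v) $ i
          = (\<Sum>j\<in>UNIV. if j = i then (if i = i0 then d1 else d2) * v$j else 0)"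
      unfolding matrix_vector_mult_def vec_lambda_beta
      by (rule sum.cong) (auto simp: axis_stretch_def)
    then show ?thesis by simp
  qed
  have "norm (axis_stretch i0 d1 d2 *v v) ^ 2 = (\<Sum>i\<in>UNIV. ((if i = i0 then d1 else d2) * v$i)^2)"
    unfolding power2_norm_eq_inner inner_vec_def stretch by (simp add: power2_eq_square)
  also have "\<dots> = (\<Sum>i\<in>UNIV. d2^2 * (v$i)^2 + (if i = i0 then (d1^2 - d2^2) * (v$i)^2 else 0))"
    by (intro sum.cong) (auto simp: power_mult_distrib algebra_simps)
  also have "\<dots> = d2^2 * (\<Sum>i\<in>UNIV. (v$i)^2) + (d1^2 - d2^2) * (v$i0)^2"
    by (simp add: sum.distrib sum_distrib_left)
  also have "(\<Sum>i\<in>UNIV. (v$i)^2) = norm v ^ 2"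
    unfolding power2_norm_eq_inner inner_vec_def by (simp add: power2_eq_square)
  finally show ?thesis .
qed

lemma det_axis_stretch: "det (axis_stretch i0 d1 d2 :: real^'n^'n) = d1 * d2 ^ (CARD('n) - 1)"
proof -
  have "det (axis_stretch i0 d1 d2 :: real^'n^'n) = (\<Prod>i\<in>UNIV. if i = i0 then d1 else d2)"
    unfolding axis_stretch_def by (subst det_diagonal) auto
  also have "\<dots> = d1 * (\<Prod>i\<in>UNIV - {i0}. if i = i0 then d1 else d2)"
    by (subst prod.remove[of _ i0]) auto
  also have "(\<Prod>i\<in>UNIV - {i0}. if i = i0 then d1 else d2) = (\<Prod>i\<in>UNIV - {i0}. d2)"
    by (intro prod.cong) auto
  also have "\<dots> = d2 ^ (CARD('n) - 1)" by (simp add: card_Diff_singleton)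
  finally show ?thesis .
qed

lemma norm_axis_stretch_le_1:
  assumes "0 \<le> \<theta>" "\<theta> \<le> 1" and w: "norm w \<le> 1" "\<bar>\<gamma> * w $ i0\<bar> \<le> 1"
  shows "norm (axis_stretch i0 (sqrt (\<theta> + (1 - \<theta>) * \<gamma>^2)) (sqrt \<theta>) *v w) \<le> 1"
proof -
  have "norm (axis_stretch i0 (sqrt (\<theta> + (1 - \<theta>) * \<gamma>^2)) (sqrt \<theta>) *v w) ^ 2
        = \<theta> * norm w ^ 2 + (1 - \<theta>) * (\<gamma> * w $ i0)^2"
    using assms(1,2) by (simp add: norm_axis_stretch_mult_squared power_mult_distrib)
  also have "\<dots> \<le> \<theta> * 1 + (1 - \<theta>) * 1"
    using assms by (intro add_mono mult_left_mono) (simp_all add: power_le_one abs_square_le_1)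
  finally show ?thesis by (simp add: power_le_one_iff abs_square_le_1)
qed

lemma one_less_sqrt_mult_sqrt_power:
  assumes "a * b ^ k > 1" "b \<ge> 0"
  shows "sqrt a * sqrt b ^ k > 1"
proof -
  have "sqrt a * sqrt b ^ k = sqrt (a * b ^ k)" by (simp add: real_sqrt_mult real_sqrt_power)
  then show ?thesis using assms(1) by simp
qed

text \<open>E stretches the direction of g and flattens its orthogonal complement; the slab keeps the
  stretched direction inside the unit ball.\<close>

lemma slab_in_larger_ellipsoid:
  fixes g :: "real^'n"
  assumes g: "norm g > sqrt (real CARD('n))"
  obtains E :: "real^'n^'n" where "\<bar>det E\<bar> > 1"
    and "\<And>v. norm v \<le> 1 \<Longrightarrow> \<bar>g \<bullet> v\<bar> \<le> 1 \<Longrightarrow> norm (E *v v) \<le> 1"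
proof -
  define \<gamma> where "\<gamma> = norm g"
  have \<gamma>0: "\<gamma> > 0" using g real_sqrt_ge_zero[of "real CARD('n)"] unfolding \<gamma>_def by linarith
  have "sqrt (real CARD('n)) ^ 2 < \<gamma>^2" using g by (intro power_strict_mono) (simp_all add: \<gamma>_def)
  then have "real CARD('n) < \<gamma>^2" by simp
  moreover have "CARD('n) \<ge> 1" by (simp add: Suc_le_eq)
  ultimately obtain \<theta> where \<theta>: "0 < \<theta>" "\<theta> < 1"
    and gain: "(\<theta> + (1 - \<theta>) * \<gamma>^2) * \<theta> ^ (CARD('n) - 1) > 1"
    using exists_flattening_with_volume_gain by blast
  obtain i0 :: 'n where True by blast
  have "norm ((1 / \<gamma>) *\<^sub>R g) = 1" using \<gamma>0 by (simp add: \<gamma>_def)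
  then obtain R where R: "orthogonal_matrix R" "R *v axis i0 1 = (1 / \<gamma>) *\<^sub>R g"
    using orthogonal_matrix_exists_basis by blast
  have coord: "(transpose R *v v) $ i0 = (g \<bullet> v) / \<gamma>" for v
  proof -
    have "(transpose R *v v) $ i0 = (transpose R *v v) \<bullet> axis i0 1" by (simp add: inner_axis)
    also have "\<dots> = v \<bullet> (R *v axis i0 1)" by (rule inner_transpose_mult)
    finally show ?thesis using R(2) by (simp add: inner_commute)
  qed
  define D :: "real^'n^'n" where "D = axis_stretch i0 (sqrt (\<theta> + (1 - \<theta>) * \<gamma>^2)) (sqrt \<theta>)"
  show ?thesis
  proof
    have "\<bar>det (transpose R)\<bar> = 1"
      using det_orthogonal_matrix[of "transpose R"] R(1) by (auto simp: orthogonal_matrix_transpose)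
    moreover have "det D > 1"
      using one_less_sqrt_mult_sqrt_power[OF gain] \<theta> by (simp add: D_def det_axis_stretch)
    ultimately show "\<bar>det (D ** transpose R)\<bar> > 1" by (simp add: det_mul abs_mult)
  next
    fix v :: "real^'n" assume v: "norm v \<le> 1" "\<bar>g \<bullet> v\<bar> \<le> 1"
    have "norm (transpose R *v v) \<le> 1" using v(1) norm_transpose_orthogonal_mult[OF R(1)] by simp
    moreover have "\<bar>\<gamma> * (transpose R *v v) $ i0\<bar> \<le> 1" unfolding coord using v(2) \<gamma>0 by simp
    ultimately have "norm (D *v (transpose R *v v)) \<le> 1"
      unfolding D_def using \<theta> by (intro norm_axis_stretch_le_1) simp_all
    then show "norm ((D ** transpose R) *v v) \<le> 1" by (simp only: matrix_vector_mul_assoc)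
  qed
qed

lemma continuous_on_det: "continuous_on S (det :: real^'n^'n \<Rightarrow> real)"
  unfolding det_def[abs_def] by (intro continuous_intros)

lemma closed_matrices_into_unit_ball: "closed {M :: real^'n^'m. \<forall>x\<in>K. norm (M *v x) \<le> 1}"
proof -
  have "closed {M :: real^'n^'m. norm (M *v x) \<le> 1}" for x
    unfolding matrix_vector_mult_def by (intro closed_Collect_le continuous_intros)
  moreover have "{M :: real^'n^'m. \<forall>x\<in>K. norm (M *v x) \<le> 1} = (\<Inter>x\<in>K. {M. norm (M *v x) \<le> 1})"
    by auto
  ultimately show ?thesis by auto
qed

lemma bounded_matrices_into_unit_ball:
  assumes "c > 0" "cball 0 c \<subseteq> K"
  shows "bounded {M :: real^'n^'m. \<forall>x\<in>K. norm (M *v x) \<le> 1}"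
proof -
  have "norm M \<le> real CARD('m) * (real CARD('n) * (1 / c))"
    if M: "\<forall>x\<in>K. norm (M *v x) \<le> 1" for M :: "real^'n^'m"
  proof (rule norm_matrix_le_entry_bound)
    fix i j
    have "c *\<^sub>R axis j 1 \<in> K" using assms by auto
    then have "norm (M *v (c *\<^sub>R axis j 1)) \<le> 1" using M by blast
    moreover have "(M *v (c *\<^sub>R axis j 1)) $ i = c * M$i$j"
      by (simp add: matrix_vector_mult_scaleR matrix_vector_mult_basis column_def)
    ultimately have "\<bar>c * M$i$j\<bar> \<le> 1"
      using component_le_norm_cart[of "M *v (c *\<^sub>R axis j 1)" i] by simp
    then show "\<bar>M$i$j\<bar> \<le> 1 / c" using assms(1) by (simp add: abs_mult field_simps)
  qed
  then show ?thesis unfolding bounded_iff by blast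
qed

text \<open>If z were outside K, a hyperplane separating z from K would cut out a slab containing
  M0 K of half-width less than 1/sqrt n; the larger ellipsoid around that slab contradicts
  the maximality of the volume of {x. norm (M0 x) \<le> 1}.\<close>

lemma mem_of_max_det_into_unit_ball:
  fixes K :: "(real^'n) set" and M0 :: "real^'n^'n"
  assumes convex: "convex K" and closed: "closed K"
    and symmetric: "\<And>x. x \<in> K \<Longrightarrow> -x \<in> K" and "0 \<in> K"
    and M0: "invertible M0" "\<forall>x\<in>K. norm (M0 *v x) \<le> 1"
    and max: "\<And>M. \<forall>x\<in>K. norm (M *v x) \<le> 1 \<Longrightarrow> \<bar>det M\<bar> \<le> \<bar>det M0\<bar>"
    and z: "sqrt (real CARD('n)) * norm (M0 *v z) \<le> 1"
  shows "z \<in> K"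
proof (rule ccontr)
  assume "z \<notin> K"
  then obtain a b where ab: "a \<bullet> z < b" "\<And>x. x \<in> K \<Longrightarrow> a \<bullet> x > b"
    using separating_hyperplane_closed_point[OF convex closed] by blast
  have b: "b < 0" using ab(2) \<open>0 \<in> K\<close> by force
  obtain N where N: "N ** M0 = mat 1" using M0(1) unfolding invertible_def by blast
  define g where "g = transpose N *v ((1 / (- b)) *\<^sub>R a)"
  have g: "g \<bullet> (M0 *v y) = (a \<bullet> y) / (- b)" for y
    unfolding g_def inner_transpose_mult by (simp add: matrix_vector_mul_assoc N)
  have slab: "\<bar>g \<bullet> (M0 *v x)\<bar> \<le> 1" if "x \<in> K" for x
  proof -
    have "a \<bullet> x > b" "a \<bullet> (- x) > b" using ab(2) that symmetric[OF that] by blast+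
    then show ?thesis using b by (simp add: g abs_le_iff field_simps)
  qed
  have "1 < \<bar>g \<bullet> (M0 *v z)\<bar>" using ab(1) b by (simp add: g field_simps)
  also have "\<dots> \<le> norm g * norm (M0 *v z)" by (rule Cauchy_Schwarz_ineq2)
  also have "\<dots> \<le> norm g * (1 / sqrt (real CARD('n)))"
    using z by (intro mult_left_mono) (simp_all add: field_simps)
  finally have "norm g > sqrt (real CARD('n))" by (simp add: field_simps)
  then obtain E where E: "\<bar>det E\<bar> > 1"
    and ellipsoid: "\<And>v. norm v \<le> 1 \<Longrightarrow> \<bar>g \<bullet> v\<bar> \<le> 1 \<Longrightarrow> norm (E *v v) \<le> 1"
    by (rule slab_in_larger_ellipsoid) blast
  have "\<forall>x\<in>K. norm ((E ** M0) *v x) \<le> 1"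
    using M0(2) slab by (auto simp: matrix_vector_mul_assoc[symmetric] intro: ellipsoid)
  moreover have "\<bar>det (E ** M0)\<bar> > \<bar>det M0\<bar>"
    using E M0(1) by (simp add: det_mul abs_mult invertible_det_nz)
  ultimately show False using max by force
qed

theorem john_symmetric_convex_body:
  fixes K :: "(real^'n) set"
  assumes convex: "convex K" and compact: "compact K"
    and symmetric: "\<And>x. x \<in> K \<Longrightarrow> -x \<in> K" and interior: "0 \<in> interior K"
  obtains M :: "real^'n^'n" where "invertible M"
    and "\<And>x. x \<in> K \<Longrightarrow> norm (M *v x) \<le> 1"
    and "\<And>z. sqrt (real CARD('n)) * norm (M *v z) \<le> 1 \<Longrightarrow> z \<in> K"
proof -
  define S where "S = {M :: real^'n^'n. \<forall>x\<in>K. norm (M *v x) \<le> 1}"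
  obtain c where c: "c > 0" "cball 0 c \<subseteq> K" using interior by (auto simp: mem_interior_cball)
  have "compact S" unfolding S_def compact_eq_bounded_closed
    using bounded_matrices_into_unit_ball[OF c] closed_matrices_into_unit_ball by blast
  obtain R where R: "R > 0" "\<And>x. x \<in> K \<Longrightarrow> norm x \<le> R"
    using compact_imp_bounded[OF compact] by (auto simp: bounded_pos)
  define M1 :: "real^'n^'n" where "M1 = matrix ((*\<^sub>R) (1 / R))"
  have M1_mult: "M1 *v x = (1 / R) *\<^sub>R x" for x
    unfolding M1_def by (simp add: matrix_vector_mul(2)[OF linear_scaleR])
  have "M1 \<in> S" using R by (simp add: S_def M1_mult divide_le_eq_1)
  then obtain M0 where M0: "M0 \<in> S" and max: "\<And>M. M \<in> S \<Longrightarrow> \<bar>det M\<bar> \<le> \<bar>det M0\<bar>"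
    using continuous_attains_sup[OF \<open>compact S\<close> _ continuous_on_rabs[OF continuous_on_det]]
    by blast
  have "\<bar>det M1\<bar> > 0" using R by (simp add: M1_def)
  then have inv: "invertible M0" using max[OF \<open>M1 \<in> S\<close>] by (simp add: invertible_det_nz)
  have into: "\<forall>x\<in>K. norm (M0 *v x) \<le> 1" using M0 by (simp add: S_def)
  have maximal: "\<And>M. \<forall>x\<in>K. norm (M *v x) \<le> 1 \<Longrightarrow> \<bar>det M\<bar> \<le> \<bar>det M0\<bar>"
    using max by (simp add: S_def)
  have "0 \<in> K" using c by auto
  show ?thesis
  proof (rule that)
    show "invertible M0" by (rule inv)
    show "\<And>x. x \<in> K \<Longrightarrow> norm (M0 *v x) \<le> 1" using into by blast
    show "\<And>z. sqrt (real CARD('n)) * norm (M0 *v z) \<le> 1 \<Longrightarrow> z \<in> K"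
      by (rule mem_of_max_det_into_unit_ball[OF convex compact_imp_closed[OF compact] symmetric
            \<open>0 \<in> K\<close> inv into maximal])
  qed
qed

lemma norm_mult_le_of_invariant:
  fixes M L :: "real^'n^'n"
  assumes M: "invertible M" "\<And>x. x \<in> K \<Longrightarrow> norm (M *v x) \<le> 1"
    "\<And>z. c * norm (M *v z) \<le> 1 \<Longrightarrow> z \<in> K" and c: "c > 0"
    and invariant: "\<And>z. z \<in> K \<Longrightarrow> L *v z \<in> K"
  shows "norm (M *v (L *v z)) \<le> c * norm (M *v z)"
proof (cases "M *v z = 0")
  case True
  then have "z = 0"
    using M(1) by (metis inj_matrix_vector_mult injD matrix_vector_mult_0_right)
  then show ?thesis by simp
next
  case False
  define s where "s = c * norm (M *v z)"
  have s: "s > 0" using False c by (simp add: s_def)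
  have "c * norm (M *v ((1 / s) *\<^sub>R z)) = 1"
    using False c by (simp add: s_def matrix_vector_mult_scaleR)
  then have "L *v ((1 / s) *\<^sub>R z) \<in> K" by (simp add: M(3) invariant)
  then have "norm (M *v (L *v ((1 / s) *\<^sub>R z))) \<le> 1" by (rule M(2))
  then show ?thesis using s by (simp add: matrix_vector_mult_scaleR s_def field_simps)
qed

subsection \<open>A switching-invariant symmetric convex body\<close>

text \<open>For r above the joint spectral radius, growth_set A m r is the unit ball of the norm
  sup over k and products T of length k of norm (T z) / r^k.\<close>

definition growth_set :: "(nat \<Rightarrow> real^'n^'n) \<Rightarrow> nat \<Rightarrow> real \<Rightarrow> (real^'n) set" where
  "growth_set A m r =
     {z. \<forall>k js. (\<forall>i<k. js i \<in> {1..m}) \<longrightarrow> norm (mat_seq_prod A js k *v z) \<le> r ^ k}"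

lemma convex_growth_set:
  fixes A :: "nat \<Rightarrow> real^'n^'n"
  shows "convex (growth_set A m r)"
  unfolding convex_def
proof (intro ballI allI impI)
  fix y z :: "real^'n" and u v :: real
  assume yz: "y \<in> growth_set A m r" "z \<in> growth_set A m r" and uv: "0 \<le> u" "0 \<le> v" "u + v = 1"
  show "u *\<^sub>R y + v *\<^sub>R z \<in> growth_set A m r" unfolding growth_set_def mem_Collect_eq
  proof (intro allI impI)
    fix k and js :: "nat \<Rightarrow> nat" assume js: "\<forall>i<k. js i \<in> {1..m}"
    let ?T = "mat_seq_prod A js k"
    have "norm (?T *v (u *\<^sub>R y + v *\<^sub>R z)) = norm (u *\<^sub>R (?T *v y) + v *\<^sub>R (?T *v z))"
      by (simp add: matrix_vector_right_distrib matrix_vector_mult_scaleR)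
    also have "\<dots> \<le> u * norm (?T *v y) + v * norm (?T *v z)"
      using uv by (metis abs_of_nonneg norm_scaleR norm_triangle_ineq)
    also have "\<dots> \<le> u * r ^ k + v * r ^ k"
      using yz js uv unfolding growth_set_def by (intro add_mono mult_left_mono) auto
    finally show "norm (?T *v (u *\<^sub>R y + v *\<^sub>R z)) \<le> r ^ k"
      using uv by (simp add: distrib_right[symmetric])
  qed
qed

lemma closed_growth_set: "closed (growth_set A m r)"
proof -
  have "growth_set A m r = (\<Inter>(k, js)\<in>{(k, js). \<forall>i<k. js i \<in> {1..m}}.
      {z. norm (mat_seq_prod A js k *v z) \<le> r ^ k})"
    unfolding growth_set_def by auto
  moreover have "closed {z. norm (T *v z) \<le> c}" for T :: "real^'n^'n" and c
    unfolding matrix_vector_mult_def by (intro closed_Collect_le continuous_intros)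
  ultimately show ?thesis by (auto intro!: closed_INT)
qed

lemma uminus_mem_growth_set: "z \<in> growth_set A m r \<Longrightarrow> - z \<in> growth_set A m r"
  by (simp add: growth_set_def vec.neg)

lemma norm_le_1_of_mem_growth_set: "z \<in> growth_set A m r \<Longrightarrow> norm z \<le> 1"
  unfolding growth_set_def by (auto dest: spec[of _ 0])

lemma compact_growth_set: "compact (growth_set A m r)"
proof -
  have "bounded (growth_set A m r)" unfolding bounded_iff using norm_le_1_of_mem_growth_set by blast
  then show ?thesis using closed_growth_set by (simp add: compact_eq_bounded_closed)
qed

lemma zero_mem_interior_growth_set:
  fixes A :: "nat \<Rightarrow> real^'n^'n"
  assumes B: "B > 0" and r: "r > 0"
    and bound: "\<And>k js. \<forall>i<k. js i \<in> {1..m} \<Longrightarrow> mat_opnorm (mat_seq_prod A js k) \<le> B * r ^ k"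
  shows "0 \<in> interior (growth_set A m r)"
proof -
  have "cball 0 (1 / B) \<subseteq> growth_set A m r"
  proof
    fix z :: "real^'n" assume "z \<in> cball 0 (1 / B)"
    then have z: "norm z \<le> 1 / B" by simp
    show "z \<in> growth_set A m r" unfolding growth_set_def mem_Collect_eq
    proof (intro allI impI)
      fix k and js :: "nat \<Rightarrow> nat" assume js: "\<forall>i<k. js i \<in> {1..m}"
      have "norm (mat_seq_prod A js k *v z) \<le> mat_opnorm (mat_seq_prod A js k) * norm z"
        by (rule norm_mult_le_mat_opnorm)
      also have "\<dots> \<le> (B * r ^ k) * (1 / B)"
        using bound[OF js] z B r by (intro mult_mono) (auto simp: mat_opnorm_nonneg)
      finally show "norm (mat_seq_prod A js k *v z) \<le> r ^ k" using B by simp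
    qed
  qed
  moreover have "1 / B > 0" using B by simp
  ultimately show ?thesis unfolding mem_interior_cball by blast
qed

lemma scaled_product_mem_growth_set:
  assumes z: "z \<in> growth_set A m r" and r: "r > 0" and w: "\<forall>t<l. w t \<in> {1..m}"
  shows "((1 / r ^ l) *\<^sub>R mat_seq_prod A w l) *v z \<in> growth_set A m r"
  unfolding growth_set_def mem_Collect_eq
proof (intro allI impI)
  fix k and js :: "nat \<Rightarrow> nat" assume js: "\<forall>i<k. js i \<in> {1..m}"
  define js' where "js' = (\<lambda>i. if i < l then w i else js (i - l))"
  have js': "\<forall>i<l + k. js' i \<in> {1..m}" unfolding js'_def using w js by auto
  have "(\<lambda>i. js' (i + l)) = js" by (simp add: js'_def)
  moreover have "mat_seq_prod A js' l = mat_seq_prod A w l"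
    by (rule mat_seq_prod_cong) (simp add: js'_def)
  ultimately have "mat_seq_prod A js' (l + k) = mat_seq_prod A js k ** mat_seq_prod A w l"
    by (simp add: mat_seq_prod_add)
  then have "mat_seq_prod A js k *v (((1 / r ^ l) *\<^sub>R mat_seq_prod A w l) *v z)
        = (1 / r ^ l) *\<^sub>R (mat_seq_prod A js' (l + k) *v z)"
    by (simp add: matrix_vector_mult_scaleR matrix_vector_mul_assoc scaleR_matrix_vector_assoc[symmetric])
  moreover have "norm (mat_seq_prod A js' (l + k) *v z) \<le> r ^ (l + k)"
    using z js' unfolding growth_set_def by blast
  ultimately show "norm (mat_seq_prod A js k *v (((1 / r ^ l) *\<^sub>R mat_seq_prod A w l) *v z)) \<le> r ^ k"
    using r by (simp add: power_add field_simps)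
qed

lemma real_root_mult_2_power:
  assumes "l > 0" "x \<ge> 0"
  shows "root (2 * l) x ^ l = sqrt x"
proof -
  have "root (2 * l) x = root l (sqrt x)" by (metis mult.commute real_root_mult_exp sqrt_def)
  then show ?thesis using assms by (simp add: real_root_pow_pos2)
qed

lemma inner_gram_mult:
  fixes M :: "real^'n^'m"
  shows "v \<bullet> ((transpose M ** M) *v v) = norm (M *v v) ^ 2"
proof -
  have "v \<bullet> ((transpose M ** M) *v v) = (transpose M *v (M *v v)) \<bullet> v"
    by (simp add: matrix_vector_mul_assoc inner_commute)
  also have "\<dots> = (M *v v) \<bullet> (M *v v)" by (rule inner_transpose_mult)
  finally show ?thesis by (simp add: power2_norm_eq_inner)
qed

lemma feasible_gram_matrix:
  fixes M :: "real^'n^'n"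
  assumes "invertible M" and "\<gamma> \<ge> 0"
    and bound: "\<And>i. i \<in> {1..N} \<Longrightarrow>
      norm (M *v (mat_seq_prod A (J i) l *v x i)) \<le> \<gamma> ^ l * norm (M *v x i)"
  shows "feasible A l N x J \<gamma> (transpose M ** M)"
  unfolding feasible_def Let_def
proof (intro conjI ballI)
  show "pos_def_mat (transpose M ** M)" unfolding pos_def_mat_def sym_mat_def
  proof (intro conjI allI impI)
    show "transpose (transpose M ** M) = transpose M ** M" by (simp add: matrix_transpose_mul)
    fix v :: "real^'n" assume "v \<noteq> 0"
    then have "M *v v \<noteq> 0"
      using assms(1) by (metis inj_matrix_vector_mult injD matrix_vector_mult_0_right)
    then show "v \<bullet> ((transpose M ** M) *v v) > 0" by (simp add: inner_gram_mult)
  qed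
  fix i assume i: "i \<in> {1..N}"
  let ?y = "mat_seq_prod A (J i) l *v x i"
  have "norm (M *v ?y) ^ 2 \<le> (\<gamma> ^ l * norm (M *v x i)) ^ 2"
    using bound[OF i] by (intro power_mono) auto
  also have "\<dots> = \<gamma> ^ (2 * l) * norm (M *v x i) ^ 2"
    by (simp add: power_mult_distrib power_mult mult.commute[of 2])
  finally show "?y \<bullet> ((transpose M ** M) *v ?y)
      \<le> \<gamma> ^ (2 * l) * (x i \<bullet> ((transpose M ** M) *v x i))"
    by (simp add: inner_gram_mult)
qed (rule assms(2))

lemma opt_value_le_of_feasible:
  assumes "feasible A l N x J \<gamma> P"
  shows "opt_value A l N x J \<le> \<gamma>"
  unfolding opt_value_def
proof (rule cInf_lower)
  show "\<gamma> \<in> {\<gamma>. \<exists>P. feasible A l N x J \<gamma> P}" using assms by blast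
  show "bdd_below {\<gamma>. \<exists>P. feasible A l N x J \<gamma> P}"
    by (rule bdd_belowI[of _ 0]) (auto simp: feasible_def)
qed

lemma opt_value_le_above_jsr:
  fixes A :: "nat \<Rightarrow> real^'n^'n"
  assumes m: "m > 0" and l: "l > 0" and J: "\<forall>i\<in>{1..N}. \<forall>t<l. J i t \<in> {1..m}"
    and r: "jsr A m < r"
  shows "opt_value A l N x J \<le> root (2 * l) (real CARD('n)) * r"
proof -
  have r0: "r > 0" by (rule mat_opnorm_le_geometric_above_jsr(1)[OF m r])
  obtain B where B: "B > 0"
    "\<And>k js. \<forall>i<k. js i \<in> {1..m} \<Longrightarrow> mat_opnorm (mat_seq_prod A js k) \<le> B * r ^ k"
    using mat_opnorm_le_geometric_above_jsr(2)[OF m r] by blast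
  let ?K = "growth_set A m r"
  have interior: "0 \<in> interior ?K" using B r0 by (intro zero_mem_interior_growth_set)
  obtain M :: "real^'n^'n" where M: "invertible M" "\<And>x. x \<in> ?K \<Longrightarrow> norm (M *v x) \<le> 1"
    "\<And>z. sqrt (real CARD('n)) * norm (M *v z) \<le> 1 \<Longrightarrow> z \<in> ?K"
    using john_symmetric_convex_body[OF convex_growth_set compact_growth_set
        uminus_mem_growth_set interior]
    by metis
  define \<gamma> where "\<gamma> = root (2 * l) (real CARD('n)) * r"
  have \<gamma>_pow: "\<gamma> ^ l = sqrt (real CARD('n)) * r ^ l"
    using l by (simp add: \<gamma>_def power_mult_distrib real_root_mult_2_power)
  have "norm (M *v (mat_seq_prod A (J i) l *v z)) \<le> \<gamma> ^ l * norm (M *v z)"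
    if i: "i \<in> {1..N}" for i z
  proof -
    let ?T = "(1 / r ^ l) *\<^sub>R mat_seq_prod A (J i) l"
    have invariant: "\<And>z. z \<in> ?K \<Longrightarrow> ?T *v z \<in> ?K"
      using scaled_product_mem_growth_set[OF _ r0] J i by blast
    have "norm (M *v (?T *v z)) \<le> sqrt (real CARD('n)) * norm (M *v z)"
      using norm_mult_le_of_invariant[OF M _ invariant] by simp
    then show ?thesis
      using r0 by (simp add: \<gamma>_pow scaleR_matrix_vector_assoc[symmetric] matrix_vector_mult_scaleR
          field_simps)
  qed
  moreover have "\<gamma> \<ge> 0"
    unfolding \<gamma>_def using r0 by (intro mult_nonneg_nonneg real_root_ge_zero) auto
  ultimately have "feasible A l N x J \<gamma> (transpose M ** M)"
    by (intro feasible_gram_matrix[OF M(1)])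
  then show ?thesis unfolding \<gamma>_def by (rule opt_value_le_of_feasible)
qed

theorem theorem3:
  fixes A :: "nat \<Rightarrow> real^'n^'n"
    and x :: "nat \<Rightarrow> real^'n"
    and J :: "nat \<Rightarrow> nat \<Rightarrow> nat"
    and m l N :: nat
  assumes "m > 0" and "l > 0" and "N > 0"
    and "\<forall>i\<in>{1..N}. norm (x i) = 1"
    and "\<forall>i\<in>{1..N}. \<forall>t<l. J i t \<in> {1..m}"
  shows "jsr A m \<ge> opt_value A l N x J / root (2*l) (real CARD('n))"
proof (rule dense_ge)
  have "root (2 * l) (real CARD('n)) > 0" using assms(2) by simp
  moreover fix r assume "jsr A m < r"
  then have "opt_value A l N x J \<le> root (2 * l) (real CARD('n)) * r"
    by (rule opt_value_le_above_jsr[OF assms(1,2,5)])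
  ultimately show "opt_value A l N x J / root (2 * l) (real CARD('n)) \<le> r"
    by (simp add: field_simps)
qed

end
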